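(* Let $n\geqslant 2$ and let $V_n$ be the set of integers $t$ such that there exist caterpillar trees $G$ (gene tree) and $S$ (species tree), both with $n$ leaves bijectively labeled by the same label set, for which $(G,S)$ has exactly $t$ coalescent histories. Then $$|V_n|\leqslant \frac12\left[\frac{1}{n}\binom{2n-2}{n-1}+\binom{n-1}{\lfloor (n-1)/2\rfloor}\right].$$
   Context: All trees are binary, rooted, leaf-labeled. A caterpillar tree is one in which some internal node is descended from all other internal nodes. For a caterpillar with $n$ leaves, internal nodes are numbered $1,\dots,n-1$ from the cherry (the internal node with exactly two descendant leaves) to the root, and internal edge $i$ is the edge immediately above node $i$, with an extra edge $n-1$ above the root. A coalescent history for a gene tree $G$ and species tree $S$ on the same label set is a map $h$ from internal nodes of $G$ to internal edges of $S$ such that (1) every label of a leaf below node $v$ of $G$ labels a leaf of $S$ below edge $h(v)$, and (2) if $v_2$ is descended from $v_1$ in $G$ then $h(v_2)$ is descended from $h(v_1)$ in $S$ (nodes and edges count as descended from themselves). *)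

theory Defs
  imports Complex_Main "HOL-Library.FuncSet"
begin

datatype tree = Leaf nat | Node tree tree

fun leaves :: "tree \<Rightarrow> nat list" where
  "leaves (Leaf a) = [a]"
| "leaves (Node l r) = leaves l @ leaves r"

text \<open>Nodes are addressed by their path from the root (False = left, True = right).\<close>
fun subtree_at :: "tree \<Rightarrow> bool list \<Rightarrow> tree option" where
  "subtree_at t [] = Some t"
| "subtree_at (Node l r) (False # p) = subtree_at l p"
| "subtree_at (Node l r) (True # p) = subtree_at r p"
| "subtree_at (Leaf a) (_ # _) = None"

definition internal_nodes :: "tree \<Rightarrow> bool list set" where
  "internal_nodes t = {p. \<exists>l r. subtree_at t p = Some (Node l r)}"

definition desc :: "bool list \<Rightarrow> bool list \<Rightarrow> bool" where
  "desc v u \<longleftrightarrow> (\<exists>w. v = u @ w)"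

definition clade :: "tree \<Rightarrow> bool list \<Rightarrow> nat set" where
  "clade t p = (case subtree_at t p of Some s \<Rightarrow> set (leaves s) | None \<Rightarrow> {})"

definition caterpillar :: "tree \<Rightarrow> bool" where
  "caterpillar t \<longleftrightarrow> (\<exists>c \<in> internal_nodes t. \<forall>u \<in> internal_nodes t. desc c u)"

text \<open>Internal edges of S are identified with the internal nodes immediately below
  them (the root carries the extra edge above it). A coalescent history maps internal
  nodes of G to internal edges of S.\<close>
definition coalescent_histories :: "tree \<Rightarrow> tree \<Rightarrow> (bool list \<Rightarrow> bool list) set" where
  "coalescent_histories G S =
    {h \<in> internal_nodes G \<rightarrow>\<^sub>E internal_nodes S.
       (\<forall>v \<in> internal_nodes G. clade G v \<subseteq> clade S (h v)) \<and>
       (\<forall>v1 \<in> internal_nodes G. \<forall>v2 \<in> internal_nodes G.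
           desc v2 v1 \<longrightarrow> desc (h v2) (h v1))}"

definition V :: "nat \<Rightarrow> nat set" where
  "V n = {t. \<exists>G S. caterpillar G \<and> caterpillar S \<and>
              distinct (leaves G) \<and> distinct (leaves S) \<and>
              length (leaves G) = n \<and> length (leaves S) = n \<and>
              set (leaves G) = set (leaves S) \<and>
              card (coalescent_histories G S) = t}"

end

theory Submission
  imports Defs
begin

text \<open>For caterpillars G and S with n leaves put k = n - 1. A coalescent history is determined
  by the depths h 0 \<le> ... \<le> h (k - 1) of the species edges receiving the spine nodes of G,
  and the admissible sequences are exactly those below the sequence M of the deepest admissible
  edges, which itself satisfies M d \<le> d. So every history count is the number N(M) of
  subdiagonal sequences below some subdiagonal M. Conjugation of these sequences, viewed as
  Young diagrams, is an order-preserving involution, hence N is constant on its orbits and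
  takes at most (C + F) / 2 values, where C = Catalan(k) counts all subdiagonal sequences
  (they are Dyck paths) and F counts the self-conjugate ones. A self-conjugate sequence is
  determined by the first k steps of its Dyck path, a ballot word of length k, and there are
  at most binomial(k, k div 2) of those.\<close>

lemma card_image_involution_le:
  assumes fin: "finite A"
    and inv: "\<And>x. x \<in> A \<Longrightarrow> \<phi> x \<in> A \<and> \<phi> (\<phi> x) = x \<and> f (\<phi> x) = f x"
  shows "2 * card (f ` A) \<le> card A + card {x \<in> A. \<phi> x = x}"
proof -
  define F where "F = {x \<in> A. \<phi> x = x}"
  define N where "N = A - F"
  have finF: "finite F" and finN: "finite N" using fin by (auto simp: F_def N_def)
  have "2 * card (f ` N) = (\<Sum>y \<in> f ` N. 2)" by simp
  also have "\<dots> \<le> (\<Sum>y \<in> f ` N. card {x \<in> N. f x = y})"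
  proof (rule sum_mono)
    fix y assume "y \<in> f ` N"
    then obtain x where x: "x \<in> N" "f x = y" by blast
    then have "{x, \<phi> x} \<subseteq> {x \<in> N. f x = y}" "\<phi> x \<noteq> x"
      using inv[of x] by (auto simp: N_def F_def)
    then show "2 \<le> card {x \<in> N. f x = y}"
      using card_mono[OF _ \<open>{x, \<phi> x} \<subseteq> _\<close>] finN by fastforce
  qed
  also have "\<dots> = card N"
    using sum.image_gen[OF finN, of "\<lambda>_. 1::nat" f] by simp
  finally have "2 * card (f ` N) \<le> card N" .
  moreover have "card (f ` A) \<le> card F + card (f ` N)"
  proof -
    have "f ` A = f ` F \<union> f ` N" by (auto simp: F_def N_def)
    then have "card (f ` A) \<le> card (f ` F) + card (f ` N)" by (simp add: card_Un_le)
    then show ?thesis using card_image_le[OF finF, of f] by linarith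
  qed
  moreover have "card A = card F + card N"
    using card_Un_disjoint[OF finF finN] by (simp add: F_def N_def Un_absorb1)
  ultimately show ?thesis by (simp add: F_def)
qed

lemma le_card_up_closed_iff:
  assumes U: "U \<subseteq> {..<k}" and up: "\<And>d d'. d \<in> U \<Longrightarrow> d \<le> d' \<Longrightarrow> d' < k \<Longrightarrow> d' \<in> U"
    and m: "1 \<le> m" "m \<le> k"
  shows "m \<le> card U \<longleftrightarrow> k - m \<in> U"
proof
  assume "k - m \<in> U"
  then have "{k-m..<k} \<subseteq> U" using up by auto
  then have "card {k-m..<k} \<le> card U" using U by (meson card_mono finite_lessThan finite_subset)
  then show "m \<le> card U" using m by simp
next
  assume "m \<le> card U"
  show "k - m \<in> U"
  proof (rule ccontr)
    assume "k - m \<notin> U"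
    have "U \<subseteq> {k-m+1..<k}"
    proof
      fix d assume "d \<in> U"
      moreover have "k - m < k" using m by simp
      ultimately have "d < k" "\<not> d \<le> k - m" using U up[of d "k - m"] \<open>k - m \<notin> U\<close> by auto
      then show "d \<in> {k-m+1..<k}" by simp
    qed
    then have "card U \<le> card {k-m+1..<k}" by (intro card_mono) auto
    then show False using \<open>m \<le> card U\<close> m by simp
  qed
qed

section \<open>Ballot words\<close>

definition ups :: "bool list \<Rightarrow> nat" where
  "ups w = length (filter id w)"

definition ballot :: "bool list \<Rightarrow> bool" where
  "ballot w \<longleftrightarrow> (\<forall>j \<le> length w. j \<le> 2 * ups (take j w))"

fun ballot_paths :: "nat \<Rightarrow> nat \<Rightarrow> bool list list" where
  "ballot_paths 0 0 = [[]]"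
| "ballot_paths (Suc u) 0 = map (\<lambda>w. w @ [True]) (ballot_paths u 0)"
| "ballot_paths 0 (Suc d) = []"
| "ballot_paths (Suc u) (Suc d) = (if d \<le> u then
      map (\<lambda>w. w @ [True]) (ballot_paths u (Suc d)) @ map (\<lambda>w. w @ [False]) (ballot_paths (Suc u) d)
    else [])"

lemma ballot_appendD: "ballot (w @ [x]) \<Longrightarrow> ballot w"
  unfolding ballot_def by (metis le_SucI length_append_singleton take_append take_eq_Nil2 append_Nil2 diff_is_0_eq')

lemma ballot_length_le: "ballot w \<Longrightarrow> length w \<le> 2 * ups w"
  unfolding ballot_def by (metis order_refl take_all)

lemma ups_le_length: "ups w \<le> length w"
  by (simp add: ups_def)

lemma ballot_in_ballot_paths:
  "ballot w \<Longrightarrow> length w = u + d \<Longrightarrow> ups w = u \<Longrightarrow> w \<in> set (ballot_paths u d)"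
proof (induction w arbitrary: u d rule: rev_induct)
  case Nil
  then show ?case by simp
next
  case (snoc x w)
  have "ballot w" using snoc.prems(1) by (rule ballot_appendD)
  have "d \<le> u" using ballot_length_le[OF snoc.prems(1)] snoc.prems(2,3) by simp
  show ?case
  proof (cases x)
    case True
    then obtain u' where u: "u = Suc u'" using snoc.prems(3) by (cases u) (auto simp: ups_def)
    then have "w \<in> set (ballot_paths u' d)"
      using snoc.IH[OF \<open>ballot w\<close>] snoc.prems(2,3) True by (simp add: ups_def)
    then show ?thesis using u True \<open>d \<le> u\<close> by (cases d) auto
  next
    case False
    have "ups w = u" using snoc.prems(3) False by (simp add: ups_def)
    then obtain d' where d: "d = Suc d'"
      using snoc.prems(2) ups_le_length[of w] by (cases d) auto
    then have "w \<in> set (ballot_paths u d')"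
      using snoc.IH[OF \<open>ballot w\<close>] snoc.prems(2) \<open>ups w = u\<close> by simp
    then show ?thesis using d False \<open>d \<le> u\<close> by (cases u) auto
  qed
qed

lemma length_ballot_paths_0: "length (ballot_paths u 0) = 1"
  by (induction u) auto

text \<open>The ballot numbers, in subtraction-free form.\<close>
lemma length_ballot_paths:
  "1 \<le> d \<Longrightarrow> d \<le> u + 1 \<Longrightarrow> length (ballot_paths u d) + ((u + d) choose (d - 1)) = (u + d) choose d"
proof (induction u d rule: ballot_paths.induct)
  case (4 u d)
  show ?case
  proof (cases "d \<le> u")
    case True
    have IH1: "length (ballot_paths u (Suc d)) + ((u + Suc d) choose d) = (u + Suc d) choose (Suc d)"
      using "4.IH"(1)[OF True] True by simp
    show ?thesis
    proof (cases d)
      case 0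
      then show ?thesis using IH1 True by (simp add: length_ballot_paths_0)
    next
      case (Suc d')
      have IH2: "length (ballot_paths (Suc u) d) + ((Suc u + d) choose d') = (Suc u + d) choose d"
        using "4.IH"(2)[OF True] Suc True by simp
      show ?thesis using IH1 IH2 True Suc by simp
    qed
  next
    case False
    then have "d = Suc u" using "4.prems" by simp
    then show ?thesis using binomial_symmetric[of "Suc u" "Suc u + Suc d"] by simp
  qed
qed auto

lemma sum_length_ballot_paths:
  "2 * m \<le> k \<Longrightarrow> (\<Sum>d\<le>m. length (ballot_paths (k - d) d)) = k choose m"
proof (induction m)
  case 0
  then show ?case by (simp add: length_ballot_paths_0)
next
  case (Suc m)
  have "length (ballot_paths (k - Suc m) (Suc m)) + ((k - Suc m + Suc m) choose (Suc m - 1))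
      = (k - Suc m + Suc m) choose Suc m"
    by (rule length_ballot_paths) (use Suc.prems in auto)
  moreover have "k - Suc m + Suc m = k" using Suc.prems by simp
  ultimately show ?case using Suc by simp
qed

lemma Suc_mult_binomial_pred_eq: "0 < k \<Longrightarrow> Suc k * ((2 * k) choose (k - 1)) = k * ((2 * k) choose k)"
proof -
  assume "0 < k"
  then have "2 * k - (k - 1) = Suc k" "Suc (k - 1) = k" by auto
  moreover have "(2 * k - (k - 1)) * ((2 * k) choose (k - 1)) = 2 * k * ((2 * k - 1) choose (k - 1))"
    by (rule binomial_absorb_comp)
  moreover have "Suc (k - 1) * ((2 * k) choose Suc (k - 1)) = 2 * k * ((2 * k - 1) choose (k - 1))"
    by (rule binomial_absorption)
  ultimately show ?thesis by metis
qed

lemma Suc_mult_length_ballot_paths_diag: "Suc k * length (ballot_paths k k) = (2 * k) choose k"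
proof (cases "k = 0")
  case False
  have "length (ballot_paths k k) + ((2 * k) choose (k - 1)) = (2 * k) choose k"
    using length_ballot_paths[of k k] False by (simp add: mult_2)
  then have "Suc k * length (ballot_paths k k) + Suc k * ((2 * k) choose (k - 1)) = Suc k * ((2 * k) choose k)"
    by (metis add_mult_distrib2)
  then show ?thesis using Suc_mult_binomial_pred_eq[of k] False by simp
qed simp

lemma card_dyck_words_le:
  "Suc k * card {w. length w = 2 * k \<and> ups w = k \<and> ballot w} \<le> (2 * k) choose k"
proof -
  have "{w. length w = 2 * k \<and> ups w = k \<and> ballot w} \<subseteq> set (ballot_paths k k)"
    using ballot_in_ballot_paths by (auto simp: mult_2)
  then have "card {w. length w = 2 * k \<and> ups w = k \<and> ballot w} \<le> length (ballot_paths k k)"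
    by (meson List.finite_set card_length card_mono le_trans)
  then show ?thesis unfolding Suc_mult_length_ballot_paths_diag[symmetric] by (rule mult_le_mono2)
qed

lemma card_ballot_words_le: "card {w. length w = k \<and> ballot w} \<le> k choose (k div 2)"
proof -
  have "{w. length w = k \<and> ballot w} \<subseteq> (\<Union>d\<le>k div 2. set (ballot_paths (k - d) d))"
  proof
    fix w assume w: "w \<in> {w. length w = k \<and> ballot w}"
    then have "k \<le> 2 * ups w" "ups w \<le> k" using ballot_length_le ups_le_length by auto
    then have "k - ups w \<le> k div 2" "k - (k - ups w) = ups w" by auto
    moreover have "w \<in> set (ballot_paths (ups w) (k - ups w))"
      using w ballot_in_ballot_paths \<open>ups w \<le> k\<close> by auto
    ultimately show "w \<in> (\<Union>d\<le>k div 2. set (ballot_paths (k - d) d))"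
      by (intro UN_I[of "k - ups w"]) auto
  qed
  then have "card {w. length w = k \<and> ballot w} \<le> card (\<Union>d\<le>k div 2. set (ballot_paths (k - d) d))"
    by (intro card_mono) auto
  also have "\<dots> \<le> (\<Sum>d\<le>k div 2. card (set (ballot_paths (k - d) d)))"
    by (rule card_UN_le) simp
  also have "\<dots> \<le> (\<Sum>d\<le>k div 2. length (ballot_paths (k - d) d))"
    by (intro sum_mono card_length)
  also have "\<dots> = k choose (k div 2)"
    by (rule sum_length_ballot_paths) simp
  finally show ?thesis .
qed

section \<open>Subdiagonal sequences and their conjugates\<close>

text \<open>The values from k on are fixed to 0 only to make the set finite.\<close>
definition subdiag_seqs :: "nat \<Rightarrow> (nat \<Rightarrow> nat) set" where
  "subdiag_seqs k = {a. (\<forall>d. k \<le> d \<longrightarrow> a d = 0) \<and> (\<forall>d. a d \<le> d) \<and>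
                       (\<forall>d d'. d \<le> d' \<longrightarrow> d' < k \<longrightarrow> a d \<le> a d')}"

lemma subdiag_seqsD:
  assumes "a \<in> subdiag_seqs k"
  shows "k \<le> d \<Longrightarrow> a d = 0" and "a d \<le> d" and "d \<le> d' \<Longrightarrow> d' < k \<Longrightarrow> a d \<le> a d'"
  using assms unfolding subdiag_seqs_def by auto

lemma subdiag_seqs_eqI:
  "a \<in> subdiag_seqs k \<Longrightarrow> b \<in> subdiag_seqs k \<Longrightarrow> (\<And>d. d < k \<Longrightarrow> a d = b d) \<Longrightarrow> a = b"
  by (metis subdiag_seqsD(1) not_le_imp_less ext)

lemma finite_subdiag_seqs: "finite (subdiag_seqs k)"
proof -
  have "subdiag_seqs k \<subseteq> {f. \<forall>x. (x \<in> {..<k} \<longrightarrow> f x \<in> {..<k}) \<and> (x \<notin> {..<k} \<longrightarrow> f x = 0)}"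
    unfolding subdiag_seqs_def by (auto, meson le_less_trans)
  then show ?thesis using finite_subset finite_set_of_finite_funs[of "{..<k}" "{..<k}" 0] by blast
qed

definition count_below :: "nat \<Rightarrow> (nat \<Rightarrow> nat) \<Rightarrow> nat" where
  "count_below k a = card {b \<in> subdiag_seqs k. \<forall>d. b d \<le> a d}"

text \<open>Drawing a as the diagram of cells (d, c) with k - a d \<le> c < k, the value conj_seq k a e
  counts the cells in column e, so conjugation is reflection of the diagram in its diagonal.\<close>
definition conj_seq :: "nat \<Rightarrow> (nat \<Rightarrow> nat) \<Rightarrow> nat \<Rightarrow> nat" where
  "conj_seq k a e = (if e < k then card {d. d < k \<and> k \<le> a d + e} else 0)"

lemma conj_seq_le: "a \<in> subdiag_seqs k \<Longrightarrow> conj_seq k a e \<le> e"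
proof (cases "e < k")
  case True
  assume a: "a \<in> subdiag_seqs k"
  have "{d. d < k \<and> k \<le> a d + e} \<subseteq> {k-e..<k}"
    using subdiag_seqsD(2)[OF a] by (auto, meson add_le_mono1 le_diff_conv le_trans)
  then have "card {d. d < k \<and> k \<le> a d + e} \<le> card {k-e..<k}" by (intro card_mono) auto
  then show ?thesis using True by (simp add: conj_seq_def)
qed (simp add: conj_seq_def)

lemma conj_seq_mono: "(\<And>d. a d \<le> b d) \<Longrightarrow> conj_seq k a e \<le> conj_seq k b e"
proof -
  assume "\<And>d. a d \<le> b d"
  then have "{d. d < k \<and> k \<le> a d + e} \<subseteq> {d. d < k \<and> k \<le> b d + e}" by (auto intro: le_trans)
  then show ?thesis by (simp add: conj_seq_def card_mono)
qed

lemma conj_seq_in_subdiag_seqs: "a \<in> subdiag_seqs k \<Longrightarrow> conj_seq k a \<in> subdiag_seqs k"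
proof -
  assume a: "a \<in> subdiag_seqs k"
  have "conj_seq k a e \<le> conj_seq k a e'" if "e \<le> e'" "e' < k" for e e'
  proof -
    have "{d. d < k \<and> k \<le> a d + e} \<subseteq> {d. d < k \<and> k \<le> a d + e'}" using that by auto
    then show ?thesis using that by (simp add: conj_seq_def card_mono)
  qed
  then show ?thesis using conj_seq_le[OF a] unfolding subdiag_seqs_def by (auto simp: conj_seq_def)
qed

lemma le_conj_seq_iff:
  assumes a: "a \<in> subdiag_seqs k" and m: "1 \<le> m" "m \<le> k" and e: "e < k"
  shows "m \<le> conj_seq k a e \<longleftrightarrow> k \<le> a (k - m) + e"
proof -
  have "m \<le> card {d. d < k \<and> k \<le> a d + e} \<longleftrightarrow> k - m \<in> {d. d < k \<and> k \<le> a d + e}"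
    by (rule le_card_up_closed_iff[OF _ _ m])
      (use subdiag_seqsD(3)[OF a] in \<open>auto, meson add_le_mono1 le_trans\<close>)
  then show ?thesis using e m by (simp add: conj_seq_def)
qed

lemma conj_seq_conj_seq: assumes a: "a \<in> subdiag_seqs k" shows "conj_seq k (conj_seq k a) = a"
proof (rule subdiag_seqs_eqI[OF conj_seq_in_subdiag_seqs[OF conj_seq_in_subdiag_seqs[OF a]] a])
  fix e assume e: "e < k"
  have "k \<le> conj_seq k a d + e \<longleftrightarrow> k - a e \<le> d" if d: "d < k" for d
  proof (cases "e = 0")
    case True
    then show ?thesis using conj_seq_le[OF a, of d] subdiag_seqsD(2)[OF a, of e] d by simp
  next
    case False
    have "k \<le> conj_seq k a d + e \<longleftrightarrow> k - e \<le> conj_seq k a d" by auto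
    also have "\<dots> \<longleftrightarrow> k \<le> a (k - (k - e)) + d"
      by (rule le_conj_seq_iff[OF a]) (use False e d in auto)
    also have "\<dots> \<longleftrightarrow> k - a e \<le> d" using e by auto
    finally show ?thesis .
  qed
  then have "{d. d < k \<and> k \<le> conj_seq k a d + e} = {k - a e..<k}" by auto
  then show "conj_seq k (conj_seq k a) e = a e"
    using e subdiag_seqsD(2)[OF a, of e] by (simp add: conj_seq_def)
qed

lemma count_below_conj_seq:
  assumes a: "a \<in> subdiag_seqs k"
  shows "count_below k (conj_seq k a) = count_below k a"
proof -
  have "bij_betw (conj_seq k) {b \<in> subdiag_seqs k. \<forall>d. b d \<le> a d}
                              {b \<in> subdiag_seqs k. \<forall>d. b d \<le> conj_seq k a d}"
  proof (rule bij_betw_byWitness[where f'="conj_seq k"])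
    show "conj_seq k ` {b \<in> subdiag_seqs k. \<forall>d. b d \<le> a d}
        \<subseteq> {b \<in> subdiag_seqs k. \<forall>d. b d \<le> conj_seq k a d}"
      using conj_seq_in_subdiag_seqs conj_seq_mono by blast
    show "conj_seq k ` {b \<in> subdiag_seqs k. \<forall>d. b d \<le> conj_seq k a d}
        \<subseteq> {b \<in> subdiag_seqs k. \<forall>d. b d \<le> a d}"
      using conj_seq_in_subdiag_seqs conj_seq_mono[of _ "conj_seq k a" k]
      unfolding conj_seq_conj_seq[OF a] by blast
  qed (simp_all add: conj_seq_conj_seq)
  then show ?thesis unfolding count_below_def by (rule bij_betw_same_card[symmetric])
qed

lemma card_count_below_image_le:
  "2 * card (count_below k ` subdiag_seqs k)
     \<le> card (subdiag_seqs k) + card {a \<in> subdiag_seqs k. conj_seq k a = a}"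
  by (rule card_image_involution_le[OF finite_subdiag_seqs])
    (simp add: conj_seq_in_subdiag_seqs conj_seq_conj_seq count_below_conj_seq)

section \<open>Dyck path encoding\<close>

text \<open>The first L steps of the Dyck path of a: its up steps are at the positions d + a d.\<close>
definition seq_word :: "nat \<Rightarrow> (nat \<Rightarrow> nat) \<Rightarrow> nat \<Rightarrow> bool list" where
  "seq_word k a L = map (\<lambda>j. j \<in> (\<lambda>d. d + a d) ` {..<k}) [0..<L]"

lemma add_seq_less_iff:
  assumes a: "a \<in> subdiag_seqs k" and "d < k" "d' < k"
  shows "d + a d < d' + a d' \<longleftrightarrow> d < d'"
  using subdiag_seqsD(3)[OF a, of d d'] subdiag_seqsD(3)[OF a, of d' d] assms(2,3)
  by (cases d d' rule: linorder_cases) auto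

lemma add_seq_le_iff:
  assumes "a \<in> subdiag_seqs k" and "d < k" "d' < k"
  shows "d + a d \<le> d' + a d' \<longleftrightarrow> d \<le> d'"
  using add_seq_less_iff[OF assms(1,3,2)] by linarith

lemma add_seq_less_double: "a \<in> subdiag_seqs k \<Longrightarrow> d < k \<Longrightarrow> d + a d < 2 * k"
  using subdiag_seqsD(2)[of a k d] by linarith

lemma inj_on_add_seq: "a \<in> subdiag_seqs k \<Longrightarrow> inj_on (\<lambda>d. d + a d) {..<k}"
  by (rule inj_onI) (metis add_seq_le_iff order.antisym order.refl lessThan_iff)

lemma length_seq_word [simp]: "length (seq_word k a L) = L"
  by (simp add: seq_word_def)

lemma ups_take_seq_word:
  assumes a: "a \<in> subdiag_seqs k" and j: "j \<le> L"
  shows "ups (take j (seq_word k a L)) = card {d. d < k \<and> d + a d < j}"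
proof -
  have "ups (take j (seq_word k a L)) = card {i. i < j \<and> i \<in> (\<lambda>d. d + a d) ` {..<k}}"
    using j by (simp add: seq_word_def ups_def take_map length_filter_conv_card min_def)
      (intro arg_cong[where f = card], auto)
  also have "{i. i < j \<and> i \<in> (\<lambda>d. d + a d) ` {..<k}} = (\<lambda>d. d + a d) ` {d. d < k \<and> d + a d < j}"
    by auto
  also have "card \<dots> = card {d. d < k \<and> d + a d < j}"
    by (rule card_image, rule inj_on_subset[OF inj_on_add_seq[OF a]]) auto
  finally show ?thesis .
qed

lemma ballot_seq_word:
  assumes a: "a \<in> subdiag_seqs k" and L: "L \<le> 2 * k"
  shows "ballot (seq_word k a L)"
  unfolding ballot_def
proof (intro allI impI)
  fix j assume "j \<le> length (seq_word k a L)"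
  then have j: "j \<le> L" by simp
  have "{..<(j + 1) div 2} \<subseteq> {d. d < k \<and> d + a d < j}"
  proof
    fix d assume "d \<in> {..<(j + 1) div 2}"
    then have "2 * d < j" by auto
    then show "d \<in> {d. d < k \<and> d + a d < j}" using subdiag_seqsD(2)[OF a, of d] j L by auto
  qed
  then have "(j + 1) div 2 \<le> card {d. d < k \<and> d + a d < j}"
    by (metis card_lessThan card_mono finite_Collect_conjI finite_Collect_less_nat)
  then show "j \<le> 2 * ups (take j (seq_word k a L))"
    using ups_take_seq_word[OF a j] by simp
qed

lemma seq_word_eqD:
  assumes a: "a \<in> subdiag_seqs k" and b: "b \<in> subdiag_seqs k"
    and eq: "seq_word k a L = seq_word k b L" and d: "d < k" and L: "d + a d < L"
  shows "a d = b d"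
proof -
  let ?j = "Suc (d + a d)"
  have "d + a d \<in> (\<lambda>d. d + b d) ` {..<k}"
    using arg_cong[OF eq, of "\<lambda>w. w ! (d + a d)"] d L by (simp add: seq_word_def)
  then obtain d' where d': "d' < k" "d' + b d' = d + a d" by auto
  have below: "{e. e < k \<and> e + c e < Suc (e' + c e')} = {..e'}"
    if "c \<in> subdiag_seqs k" "e' < k" for c e'
    using that add_seq_le_iff[OF that(1), of _ e'] by (auto simp: less_Suc_eq_le)
  \<comment> \<open>the step at position d + a d is the Suc d-th up step of both words\<close>
  have "Suc d = ups (take ?j (seq_word k a L))"
    using ups_take_seq_word[OF a] below[OF a d] L by simp
  also have "\<dots> = Suc d'"
    using ups_take_seq_word[OF b] below[OF b d'(1)] L d'(2) eq by simp
  finally show ?thesis using d' by simp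
qed

lemma card_subdiag_seqs_le: "Suc k * card (subdiag_seqs k) \<le> (2 * k) choose k"
proof -
  have "inj_on (\<lambda>a. seq_word k a (2 * k)) (subdiag_seqs k)"
  proof (rule inj_onI)
    fix a b assume a: "a \<in> subdiag_seqs k" and b: "b \<in> subdiag_seqs k"
      and eq: "seq_word k a (2 * k) = seq_word k b (2 * k)"
    show "a = b"
      by (rule subdiag_seqs_eqI[OF a b], rule seq_word_eqD[OF a b eq])
        (simp_all add: add_seq_less_double[OF a])
  qed
  moreover have "(\<lambda>a. seq_word k a (2 * k)) ` subdiag_seqs k
      \<subseteq> {w. length w = 2 * k \<and> ups w = k \<and> ballot w}"
  proof safe
    fix a assume a: "a \<in> subdiag_seqs k"
    have "{d. d < k \<and> d + a d < 2 * k} = {..<k}"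
      using add_seq_less_double[OF a] by auto
    then show "ups (seq_word k a (2 * k)) = k"
      using ups_take_seq_word[OF a, of "2 * k" "2 * k"] by (simp add: seq_word_def)
  qed (simp_all add: ballot_seq_word)
  ultimately have "card (subdiag_seqs k) \<le> card {w. length w = 2 * k \<and> ups w = k \<and> ballot w}"
    by (rule card_inj_on_le) (use finite_lists_length_eq[of "UNIV :: bool set"] in simp)
  then show ?thesis using card_dyck_words_le[of k] by (meson le_trans mult_le_mono2)
qed

lemma le_add_seq_cross:
  assumes a: "a \<in> subdiag_seqs k" and "d < k" "e < k" "k \<le> d + a d" "k \<le> e + a e"
  shows "k \<le> a e + d"
proof (cases "e \<le> d")
  case False
  then show ?thesis using subdiag_seqsD(3)[OF a, of d e] assms(3,4) by simp
qed (use assms(5) in simp)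

text \<open>Conjugation recovers the values of a self-conjugate sequence on and above the antidiagonal
  d + a d = k from those below it.\<close>
lemma self_conj_seq_eqI:
  assumes a: "a \<in> subdiag_seqs k" "conj_seq k a = a" and b: "b \<in> subdiag_seqs k" "conj_seq k b = b"
    and low: "\<And>d. d < k \<Longrightarrow> d + a d < k \<or> d + b d < k \<Longrightarrow> a d = b d"
  shows "a = b"
proof (rule subdiag_seqs_eqI[OF a(1) b(1)])
  fix d assume d: "d < k"
  show "a d = b d"
  proof (cases "d + a d < k \<or> d + b d < k")
    case False
    have "k \<le> a e + d \<longleftrightarrow> k \<le> b e + d" if e: "e < k" for e
    proof (cases "e + a e < k \<or> e + b e < k")
      case False': False
      then show ?thesis using le_add_seq_cross[OF a(1) d e] le_add_seq_cross[OF b(1) d e] False by simp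
    qed (use low[OF e] in simp)
    then have "{e. e < k \<and> k \<le> a e + d} = {e. e < k \<and> k \<le> b e + d}" by auto
    then have "conj_seq k a d = conj_seq k b d" by (simp add: conj_seq_def)
    then show ?thesis using a(2) b(2) by simp
  qed (use low d in simp)
qed

lemma card_self_conj_seqs_le: "card {a \<in> subdiag_seqs k. conj_seq k a = a} \<le> k choose (k div 2)"
proof -
  have "inj_on (\<lambda>a. seq_word k a k) {a \<in> subdiag_seqs k. conj_seq k a = a}"
  proof (rule inj_onI, clarify)
    fix a b assume a: "a \<in> subdiag_seqs k" "conj_seq k a = a" and b: "b \<in> subdiag_seqs k" "conj_seq k b = b"
      and eq: "seq_word k a k = seq_word k b k"
    show "a = b"
    proof (rule self_conj_seq_eqI[OF a b])
      fix d assume "d < k" "d + a d < k \<or> d + b d < k"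
      then show "a d = b d"
        using seq_word_eqD[OF a(1) b(1) eq, of d] seq_word_eqD[OF b(1) a(1) eq[symmetric], of d] by auto
    qed
  qed
  moreover have "(\<lambda>a. seq_word k a k) ` {a \<in> subdiag_seqs k. conj_seq k a = a}
      \<subseteq> {w. length w = k \<and> ballot w}"
    by (auto simp: ballot_seq_word)
  ultimately have "card {a \<in> subdiag_seqs k. conj_seq k a = a} \<le> card {w. length w = k \<and> ballot w}"
    by (rule card_inj_on_le) (use finite_lists_length_eq[of "UNIV :: bool set"] in simp)
  then show ?thesis using card_ballot_words_le by (rule le_trans)
qed

section \<open>Caterpillars and their coalescent histories\<close>

lemma subtree_at_append:
  "subtree_at t (p @ q) = (case subtree_at t p of None \<Rightarrow> None | Some s \<Rightarrow> subtree_at s q)"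
  by (induction t p rule: subtree_at.induct) auto

lemma subtree_at_snoc:
  "subtree_at t p = Some (Node l r) \<Longrightarrow> subtree_at t (p @ [b]) = Some (if b then r else l)"
  by (simp add: subtree_at_append)

lemma internal_nodes_append_imp: "p @ q \<in> internal_nodes t \<Longrightarrow> p \<in> internal_nodes t"
proof -
  assume "p @ q \<in> internal_nodes t"
  then obtain l r s where s: "subtree_at t p = Some s" "subtree_at s q = Some (Node l r)"
    by (auto simp: internal_nodes_def subtree_at_append split: option.splits)
  then have "\<exists>l' r'. s = Node l' r'" by (cases s; cases q) auto
  then show ?thesis using s(1) by (auto simp: internal_nodes_def)
qed

lemma leaves_subtree_at: "subtree_at t p = Some s \<Longrightarrow> \<exists>xs ys. leaves t = xs @ leaves s @ ys"
proof (induction t p rule: subtree_at.induct)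
  case (2 l r p)
  then obtain xs ys where "leaves l = xs @ leaves s @ ys" by auto
  then show ?case by (intro exI[of _ xs] exI[of _ "ys @ leaves r"]) simp
next
  case (3 l r p)
  then obtain xs ys where "leaves r = xs @ leaves s @ ys" by auto
  then show ?case by (intro exI[of _ "leaves l @ xs"] exI[of _ ys]) simp
qed (auto intro!: exI[of _ "[]"])

lemma clade_append_subset: "clade t (p @ q) \<subseteq> clade t p"
proof (cases "subtree_at t p")
  case (Some s)
  show ?thesis
  proof (cases "subtree_at s q")
    case (Some s')
    then obtain xs ys where "leaves s = xs @ leaves s' @ ys" using leaves_subtree_at by blast
    then show ?thesis using Some \<open>subtree_at t p = Some s\<close> by (auto simp: clade_def subtree_at_append)
  qed (simp add: Some clade_def subtree_at_append)
qed (simp add: clade_def subtree_at_append)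

lemma clade_take_antimono: "i \<le> j \<Longrightarrow> clade t (take j c) \<subseteq> clade t (take i c)"
  by (metis clade_append_subset take_add le_add_diff_inverse)

lemma desc_take: "i \<le> j \<Longrightarrow> desc (take j c) (take i c)"
  unfolding desc_def by (metis append_take_drop_id min.absorb1 take_take)

lemma desc_length_le: "desc v u \<Longrightarrow> length u \<le> length v"
  unfolding desc_def by auto

locale caterpillar_spine =
  fixes t :: tree and c :: "bool list"
  assumes spine_internal: "c \<in> internal_nodes t"
    and spine_desc: "\<And>u. u \<in> internal_nodes t \<Longrightarrow> desc c u"
begin

lemma internal_nodes_iff: "u \<in> internal_nodes t \<longleftrightarrow> (\<exists>i \<le> length c. u = take i c)"
proof
  assume "u \<in> internal_nodes t"
  then obtain w where "c = u @ w" using spine_desc unfolding desc_def by blast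
  then show "\<exists>i \<le> length c. u = take i c" by (intro exI[of _ "length u"]) simp
next
  assume "\<exists>i \<le> length c. u = take i c"
  then show "u \<in> internal_nodes t"
    using spine_internal internal_nodes_append_imp by (metis append_take_drop_id)
qed

lemma take_spine_internal: "take i c \<in> internal_nodes t"
  using internal_nodes_iff by (cases "i \<le> length c") auto

lemma off_spine_child_not_internal:
  assumes "i \<le> length c" and off: "i < length c \<Longrightarrow> b \<noteq> c ! i"
  shows "take i c @ [b] \<notin> internal_nodes t"
proof
  assume "take i c @ [b] \<in> internal_nodes t"
  then obtain w where "c = take i c @ [b] @ w" using spine_desc unfolding desc_def by fastforce
  then have drop: "drop i c = b # w" by (metis append_take_drop_id same_append_eq append_Cons append_Nil)
  then have i: "i < length c" by (metis drop_eq_Nil2 list.simps(3) not_le_imp_less)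
  have "c ! i = b" using drop Cons_nth_drop_Suc[OF i] by simp
  then show False using off i by simp
qed

lemma length_leaves_subtree_at_take:
  "d \<le> length c \<Longrightarrow> \<exists>s. subtree_at t (take d c) = Some s \<and> length (leaves s) = length c - d + 2"
proof (induction "length c - d" arbitrary: d)
  case 0
  then obtain l r where lr: "subtree_at t (take d c) = Some (Node l r)"
    using spine_internal by (auto simp: internal_nodes_def)
  have leaf: "length (leaves x) = 1" if "subtree_at t (take d c @ [b]) = Some x" for b x
    using that off_spine_child_not_internal[of d b] 0 by (cases x) (auto simp: internal_nodes_def)
  have "length (leaves l) = 1" "length (leaves r) = 1"
    using leaf[of False] leaf[of True] subtree_at_snoc[OF lr] by auto
  then show ?case using lr 0 by simp
next
  case (Suc m)
  then have d: "d < length c" by simp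
  obtain l r where lr: "subtree_at t (take d c) = Some (Node l r)"
    using take_spine_internal[of d] by (auto simp: internal_nodes_def)
  have "take (Suc d) c = take d c @ [c ! d]" using d by (simp add: take_Suc_conv_app_nth)
  moreover obtain s where "subtree_at t (take (Suc d) c) = Some s" "length (leaves s) = length c - Suc d + 2"
    using Suc.hyps(1)[of "Suc d"] Suc.hyps(2) d by (metis Suc_diff_Suc Suc_inject Suc_leI)
  moreover have "length (leaves x) = 1" if "subtree_at t (take d c @ [\<not> c ! d]) = Some x" for x
    using that off_spine_child_not_internal[of d "\<not> c ! d"] d by (cases x) (auto simp: internal_nodes_def)
  ultimately show ?case using subtree_at_snoc[OF lr] lr d by (cases "c ! d") auto
qed

lemma length_leaves: "length (leaves t) = length c + 2"
  using length_leaves_subtree_at_take[of 0] by simp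

lemma card_clade_take:
  assumes "distinct (leaves t)" and "d \<le> length c"
  shows "card (clade t (take d c)) = length (leaves t) - d"
proof -
  obtain s where s: "subtree_at t (take d c) = Some s" "length (leaves s) = length c - d + 2"
    using length_leaves_subtree_at_take[OF assms(2)] by blast
  obtain xs ys where "leaves t = xs @ leaves s @ ys" using leaves_subtree_at[OF s(1)] by blast
  then have "distinct (leaves s)" using assms(1) by simp
  then show ?thesis using s length_leaves assms(2) by (simp add: clade_def distinct_card)
qed

end

lemma coalescent_historiesD:
  assumes "h \<in> coalescent_histories G S" and "v \<in> internal_nodes G"
  shows "h v \<in> internal_nodes S" and "clade G v \<subseteq> clade S (h v)"
    and "v' \<in> internal_nodes G \<Longrightarrow> desc v' v \<Longrightarrow> desc (h v') (h v)"
  using assms unfolding coalescent_histories_def by auto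

lemma coalescent_historiesI:
  assumes "h \<in> internal_nodes G \<rightarrow>\<^sub>E internal_nodes S"
    and "\<And>v. v \<in> internal_nodes G \<Longrightarrow> clade G v \<subseteq> clade S (h v)"
    and "\<And>v v'. v \<in> internal_nodes G \<Longrightarrow> v' \<in> internal_nodes G \<Longrightarrow> desc v' v \<Longrightarrow> desc (h v') (h v)"
  shows "h \<in> coalescent_histories G S"
  using assms unfolding coalescent_histories_def by auto

locale caterpillar_pair =
  G: caterpillar_spine G cg + S: caterpillar_spine S cs for G cg S cs +
  assumes distinct_G: "distinct (leaves G)" and distinct_S: "distinct (leaves S)"
    and same_labels: "set (leaves G) = set (leaves S)"
begin

abbreviation ninternal :: nat where
  "ninternal \<equiv> Suc (length cg)"

lemma length_spines_eq: "length cs = length cg"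
  using G.length_leaves S.length_leaves distinct_card[OF distinct_G] distinct_card[OF distinct_S]
    same_labels by simp

lemma internal_nodes_G_iff: "v \<in> internal_nodes G \<longleftrightarrow> (\<exists>i < ninternal. v = take i cg)"
  using G.internal_nodes_iff less_Suc_eq_le by auto

lemma internal_nodes_S_iff: "w \<in> internal_nodes S \<longleftrightarrow> (\<exists>i < ninternal. w = take i cs)"
  using S.internal_nodes_iff length_spines_eq less_Suc_eq_le by auto

lemma card_clade_G: "d < ninternal \<Longrightarrow> card (clade G (take d cg)) = Suc ninternal - d"
  using G.card_clade_take[OF distinct_G, of d] G.length_leaves by simp

lemma card_clade_S: "e < ninternal \<Longrightarrow> card (clade S (take e cs)) = Suc ninternal - e"
  using S.card_clade_take[OF distinct_S, of e] S.length_leaves length_spines_eq by simp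

text \<open>Depth of the deepest spine edge of S onto which the spine node of G at depth d can be
  mapped (edges are named by the node below them, the root edge has depth 0).\<close>
definition lowest_edge :: "nat \<Rightarrow> nat" where
  "lowest_edge d = (if d < ninternal
     then Max {e. e < ninternal \<and> clade G (take d cg) \<subseteq> clade S (take e cs)} else 0)"

lemma lowest_edge:
  assumes "d < ninternal"
  shows "lowest_edge d < ninternal" and "clade G (take d cg) \<subseteq> clade S (take (lowest_edge d) cs)"
proof -
  have "clade G (take d cg) \<subseteq> clade S (take 0 cs)"
    using clade_take_antimono[of 0 d G cg] same_labels by (simp add: clade_def)
  then have "{e. e < ninternal \<and> clade G (take d cg) \<subseteq> clade S (take e cs)} \<noteq> {}" by blast
  from Max_in[OF _ this]
  have "lowest_edge d \<in> {e. e < ninternal \<and> clade G (take d cg) \<subseteq> clade S (take e cs)}"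
    using assms by (simp add: lowest_edge_def)
  then show "lowest_edge d < ninternal" and "clade G (take d cg) \<subseteq> clade S (take (lowest_edge d) cs)"
    by auto
qed

lemma le_lowest_edge_iff:
  assumes d: "d < ninternal" and e: "e < ninternal"
  shows "e \<le> lowest_edge d \<longleftrightarrow> clade G (take d cg) \<subseteq> clade S (take e cs)"
proof
  assume "e \<le> lowest_edge d"
  then show "clade G (take d cg) \<subseteq> clade S (take e cs)"
    using lowest_edge(2)[OF d] clade_take_antimono by blast
next
  assume "clade G (take d cg) \<subseteq> clade S (take e cs)"
  then show "e \<le> lowest_edge d" unfolding lowest_edge_def using d e by simp
qed

lemma lowest_edge_in_subdiag_seqs: "lowest_edge \<in> subdiag_seqs ninternal"
  unfolding subdiag_seqs_def
proof (intro CollectI conjI allI impI)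
  fix d
  show "lowest_edge d \<le> d"
  proof (cases "d < ninternal")
    case True
    have "card (clade G (take d cg)) \<le> card (clade S (take (lowest_edge d) cs))"
      using lowest_edge[OF True] by (intro card_mono) (auto simp: clade_def split: option.splits)
    then show ?thesis using card_clade_G[OF True] card_clade_S[OF lowest_edge(1)[OF True]] True by simp
  qed (simp add: lowest_edge_def)
next
  fix d d' assume "d \<le> d'" "d' < ninternal"
  then have "clade G (take d' cg) \<subseteq> clade S (take (lowest_edge d) cs)"
    using clade_take_antimono lowest_edge(2)[of d] by (meson le_less_trans subset_trans)
  then show "lowest_edge d \<le> lowest_edge d'"
    using le_lowest_edge_iff[OF \<open>d' < ninternal\<close>] lowest_edge(1)[of d] \<open>d \<le> d'\<close> \<open>d' < ninternal\<close> by simp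
qed (simp add: lowest_edge_def)

definition hist_seq :: "(bool list \<Rightarrow> bool list) \<Rightarrow> nat \<Rightarrow> nat" where
  "hist_seq h d = (if d < ninternal then length (h (take d cg)) else 0)"

definition seq_hist :: "(nat \<Rightarrow> nat) \<Rightarrow> bool list \<Rightarrow> bool list" where
  "seq_hist a v = (if v \<in> internal_nodes G then take (a (length v)) cs else undefined)"

lemma history_image:
  assumes "h \<in> coalescent_histories G S" and "d < ninternal"
  shows "h (take d cg) = take (hist_seq h d) cs" and "hist_seq h d < ninternal"
proof -
  obtain i where "i < ninternal" "h (take d cg) = take i cs"
    using coalescent_historiesD(1)[OF assms(1) G.take_spine_internal] internal_nodes_S_iff by blast
  then show "h (take d cg) = take (hist_seq h d) cs" and "hist_seq h d < ninternal"
    using assms(2) length_spines_eq by (auto simp: hist_seq_def)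
qed

lemma hist_seq_in:
  assumes h: "h \<in> coalescent_histories G S"
  shows "hist_seq h \<in> {a \<in> subdiag_seqs ninternal. \<forall>d. a d \<le> lowest_edge d}"
proof -
  have below: "hist_seq h d \<le> lowest_edge d" for d
  proof (cases "d < ninternal")
    case True
    have "clade G (take d cg) \<subseteq> clade S (take (hist_seq h d) cs)"
      using coalescent_historiesD(2)[OF h G.take_spine_internal[of d]] history_image(1)[OF h True] by simp
    then show ?thesis using le_lowest_edge_iff[OF True history_image(2)[OF h True]] by simp
  qed (simp add: hist_seq_def)
  have "hist_seq h d \<le> hist_seq h d'" if "d \<le> d'" "d' < ninternal" for d d'
  proof -
    have "desc (h (take d' cg)) (h (take d cg))"
      using coalescent_historiesD(3)[OF h G.take_spine_internal G.take_spine_internal desc_take[OF that(1)]] .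
    then show ?thesis using desc_length_le that by (simp add: hist_seq_def)
  qed
  moreover have "hist_seq h d \<le> d" for d
    using below[of d] subdiag_seqsD(2)[OF lowest_edge_in_subdiag_seqs, of d] by linarith
  ultimately show ?thesis using below by (simp add: subdiag_seqs_def hist_seq_def)
qed

lemma seq_hist_in:
  assumes a: "a \<in> subdiag_seqs ninternal" and below: "\<And>d. a d \<le> lowest_edge d"
  shows "seq_hist a \<in> coalescent_histories G S"
proof (rule coalescent_historiesI)
  have a_less: "a d < ninternal" if "d < ninternal" for d
    using subdiag_seqsD(2)[OF a, of d] that by simp
  show "seq_hist a \<in> internal_nodes G \<rightarrow>\<^sub>E internal_nodes S"
    unfolding PiE_iff extensional_def seq_hist_def using S.take_spine_internal by simp
  show "clade G v \<subseteq> clade S (seq_hist a v)" if v: "v \<in> internal_nodes G" for v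
  proof -
    obtain i where i: "i < ninternal" "v = take i cg" using v internal_nodes_G_iff by blast
    have "clade G (take i cg) \<subseteq> clade S (take (a i) cs)"
      using le_lowest_edge_iff[OF i(1) a_less[OF i(1)]] below[of i] by blast
    then show ?thesis using v i by (simp add: seq_hist_def)
  qed
  show "desc (seq_hist a v') (seq_hist a v)"
    if v: "v \<in> internal_nodes G" "v' \<in> internal_nodes G" and desc: "desc v' v" for v v'
  proof -
    obtain i i' where i: "i < ninternal" "v = take i cg" and i': "i' < ninternal" "v' = take i' cg"
      using v internal_nodes_G_iff by blast
    then have "i \<le> i'" using desc_length_le[OF desc] by simp
    then have "desc (take (a i') cs) (take (a i) cs)"
      by (intro desc_take subdiag_seqsD(3)[OF a _ i'(1)])
    then show ?thesis using v i i' by (simp add: seq_hist_def)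
  qed
qed

lemma seq_hist_hist_seq:
  assumes h: "h \<in> coalescent_histories G S"
  shows "seq_hist (hist_seq h) = h"
proof
  fix v
  show "seq_hist (hist_seq h) v = h v"
  proof (cases "v \<in> internal_nodes G")
    case True
    then obtain i where "i < ninternal" "v = take i cg" using internal_nodes_G_iff by blast
    then show ?thesis using True history_image(1)[OF h] by (simp add: seq_hist_def)
  next
    case False
    then show ?thesis using h by (auto simp: seq_hist_def coalescent_histories_def PiE_def extensional_def)
  qed
qed

lemma hist_seq_seq_hist:
  assumes a: "a \<in> subdiag_seqs ninternal"
  shows "hist_seq (seq_hist a) = a"
proof
  fix d
  show "hist_seq (seq_hist a) d = a d"
    using G.take_spine_internal subdiag_seqsD(1,2)[OF a, of d] length_spines_eq
    by (cases "d < ninternal") (auto simp: hist_seq_def seq_hist_def)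
qed

lemma card_coalescent_histories: "card (coalescent_histories G S) = count_below ninternal lowest_edge"
proof -
  have "bij_betw hist_seq (coalescent_histories G S)
                          {a \<in> subdiag_seqs ninternal. \<forall>d. a d \<le> lowest_edge d}"
  proof (rule bij_betw_byWitness[where f' = seq_hist])
    show "\<forall>h \<in> coalescent_histories G S. seq_hist (hist_seq h) = h"
      using seq_hist_hist_seq by blast
    show "\<forall>a \<in> {a \<in> subdiag_seqs ninternal. \<forall>d. a d \<le> lowest_edge d}. hist_seq (seq_hist a) = a"
      using hist_seq_seq_hist by blast
    show "hist_seq ` coalescent_histories G S
        \<subseteq> {a \<in> subdiag_seqs ninternal. \<forall>d. a d \<le> lowest_edge d}"
      using hist_seq_in by blast
    show "seq_hist ` {a \<in> subdiag_seqs ninternal. \<forall>d. a d \<le> lowest_edge d}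
        \<subseteq> coalescent_histories G S"
      using seq_hist_in by blast
  qed
  then show ?thesis unfolding count_below_def by (rule bij_betw_same_card)
qed

end

lemma caterpillar_spine_exists: "caterpillar t \<Longrightarrow> \<exists>c. caterpillar_spine t c"
  unfolding caterpillar_def caterpillar_spine_def by blast

lemma V_subset_count_below_image: "V n \<subseteq> count_below (n - 1) ` subdiag_seqs (n - 1)"
proof
  fix t assume "t \<in> V n"
  then obtain G S where cat: "caterpillar G" "caterpillar S"
    and pair: "distinct (leaves G)" "distinct (leaves S)" "set (leaves G) = set (leaves S)"
    and n: "length (leaves G) = n" and t: "card (coalescent_histories G S) = t"
    unfolding V_def by blast
  obtain cg cs where "caterpillar_spine G cg" "caterpillar_spine S cs"
    using cat caterpillar_spine_exists by blast
  then interpret caterpillar_pair G cg S cs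
    using pair by (simp add: caterpillar_pair_def caterpillar_pair_axioms_def)
  have "n - 1 = ninternal" using G.length_leaves n by simp
  then show "t \<in> count_below (n - 1) ` subdiag_seqs (n - 1)"
    using card_coalescent_histories lowest_edge_in_subdiag_seqs t by simp
qed

theorem proposition3:
  fixes n :: nat
  assumes "n \<ge> 2"
  shows "real (card (V n)) \<le>
    (1/2) * ((1 / real n) * real ((2*n - 2) choose (n - 1))
             + real ((n - 1) choose ((n - 1) div 2)))"
proof -
  define k where "k = n - 1"
  have n: "n = Suc k" "2 * n - 2 = 2 * k" using assms by (auto simp: k_def)
  have "card (V n) \<le> card (count_below k ` subdiag_seqs k)"
    using V_subset_count_below_image[of n] finite_subdiag_seqs
    by (intro card_mono) (auto simp: k_def)
  then have "2 * card (V n) \<le> card (subdiag_seqs k) + card {a \<in> subdiag_seqs k. conj_seq k a = a}"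
    using card_count_below_image_le[of k] by linarith
  moreover have "real (card (subdiag_seqs k)) \<le> real ((2 * k) choose k) / real n"
  proof -
    have "real n * real (card (subdiag_seqs k)) \<le> real ((2 * k) choose k)"
      using card_subdiag_seqs_le[of k] n(1) by (metis of_nat_le_iff of_nat_mult)
    then show ?thesis using assms by (simp add: field_simps)
  qed
  moreover have "card {a \<in> subdiag_seqs k. conj_seq k a = a} \<le> k choose (k div 2)"
    by (rule card_self_conj_seqs_le)
  ultimately show ?thesis unfolding n(2) k_def[symmetric] by simp
qed

end
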